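(* No absolute prime has all four of the digits $1,3,7,9$ appearing in its decimal representation.
   Context: For a positive integer $N$ with decimal representation $d_1d_2\dots d_n$ (digits $d_k\in\{0,\dots,9\}$, $d_1\neq 0$), a permutation of the digits of $N$ is any integer $\sum_{k=1}^{n} d_{\sigma(k)}10^{n-k}$ with $\sigma$ a permutation of $\{1,\dots,n\}$. $N$ is called an absolute prime if every integer obtained by a permutation of the digits of $N$ (including $N$ itself) is prime. *)

theory Defs
  imports "HOL-Computational_Algebra.Primes" "HOL-Library.Multiset"
begin

text \<open>Decimal digits of a positive integer, most significant first
  (for n = 0 this gives [0], irrelevant since N is positive).\<close>
fun decimal_digits :: "nat \<Rightarrow> nat list" where
  "decimal_digits n = (if n < 10 then [n] else decimal_digits (n div 10) @ [n mod 10])"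

definition from_digits :: "nat list \<Rightarrow> nat" where
  "from_digits ds = foldl (\<lambda>a d. 10 * a + d) 0 ds"

definition absolute_prime :: "nat \<Rightarrow> bool" where
  "absolute_prime N \<longleftrightarrow> N > 0 \<and>
     (\<forall>ds. mset ds = mset (decimal_digits N) \<longrightarrow> prime (from_digits ds))"

end

theory Submission
  imports Defs
begin

text \<open>Put all other digits of N first and 1, 3, 7, 9 last. Since 10000 \<equiv> 4 (mod 7), the
  resulting number is congruent to 4 r + p modulo 7, where r is the value of the leading digits
  and p the four-digit number formed by 1, 3, 7, 9. The arrangements 1379, 1739, 1973, 3719, 1937,
  1793, 1397 make 4 r + p \<equiv> 0 (mod 7) for r \<equiv> 0, ..., 6 in turn, so one of them makes
  the whole number a multiple of 7 larger than 7.\<close>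

lemma foldl_decimal_shift:
  "foldl (\<lambda>a d. 10 * a + d) a ds = a * 10 ^ length ds + foldl (\<lambda>a d. 10 * a + d) (0::nat) ds"
proof (induction ds arbitrary: a)
  case Nil
  then show ?case by simp
next
  case (Cons d ds)
  show ?case
    using Cons.IH[of "10 * a + d"] Cons.IH[of d] by (simp add: algebra_simps)
qed

lemma from_digits_append:
  "from_digits (xs @ ys) = from_digits xs * 10 ^ length ys + from_digits ys"
  unfolding from_digits_def foldl_append by (rule foldl_decimal_shift)

lemma mset_le_if_distinct_subset:
  assumes "distinct xs" and "set xs \<subseteq> set ys"
  shows "mset xs \<subseteq># mset ys"
proof -
  have "mset xs = mset_set (set xs)"
    using assms(1) by (simp add: mset_set_set)
  also have "\<dots> \<subseteq># mset_set (set ys)"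
    using assms(2) by (simp add: subset_imp_msubset_mset_set)
  also have "\<dots> = mset (remdups ys)"
    using mset_set_set[of "remdups ys"] by simp
  also have "\<dots> \<subseteq># mset ys"
    by (rule mset_remdups_subset_eq)
  finally show ?thesis .
qed

lemma not_prime_if_proper_divisor:
  assumes "d dvd q" and "1 < d" and "d < (q::nat)"
  shows "\<not> prime q"
  using assms unfolding prime_nat_iff by auto

lemma mod_7_mult_10000_add:
  "((a::nat) * 10000 + b) mod 7 = (4 * (a mod 7) + b) mod 7"
proof -
  have "a * 10000 + b = 4 * a + b + 7 * (1428 * a)"
    by simp
  also have "\<dots> mod 7 = (4 * a + b) mod 7"
    by (rule mod_mult_self2)
  also have "\<dots> = (4 * (a mod 7) + b) mod 7"
    by (metis mod_add_left_eq mod_mult_right_eq)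
  finally show ?thesis .
qed

lemma exists_arrangement_1379_composite:
  "\<exists>ds. mset ds = {#1, 3, 7, 9#} \<and> \<not> prime (from_digits (xs @ ds))"
proof -
  define ws :: "nat list list" where
    "ws = [[1,3,7,9], [1,7,3,9], [1,9,7,3], [3,7,1,9], [1,9,3,7], [1,7,9,3], [1,3,9,7]]"
  define k where "k = from_digits xs mod 7"
  define ds where "ds = ws ! k"
  have "k \<in> {0, 1, 2, 3, 4, 5, 6}"
    unfolding k_def by auto
  then have arrangement: "mset ds = {#1, 3, 7, 9#}"
    and residue: "(4 * k + from_digits ds) mod 7 = 0"
    and length: "length ds = 4" and large: "from_digits ds > 7"
    unfolding ds_def ws_def by (auto simp: from_digits_def add_mset_commute)
  have ds_value: "from_digits (xs @ ds) = from_digits xs * 10000 + from_digits ds"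
    using length by (simp add: from_digits_append)
  have "from_digits (xs @ ds) mod 7 = 0"
    using residue unfolding ds_value mod_7_mult_10000_add k_def .
  then have "7 dvd from_digits (xs @ ds)"
    by (simp add: dvd_eq_mod_eq_0)
  moreover have "from_digits (xs @ ds) > 7"
    using large ds_value by simp
  ultimately have "\<not> prime (from_digits (xs @ ds))"
    by (intro not_prime_if_proper_divisor[of 7]) auto
  with arrangement show ?thesis
    by blast
qed

lemma exists_non_prime_permutation_if_1379:
  assumes "{1, 3, 7, 9} \<subseteq> set ys"
  shows "\<exists>zs. mset zs = mset ys \<and> \<not> prime (from_digits zs)"
proof -
  have "mset [1, 3, 7, 9] \<subseteq># mset ys"
    using assms by (intro mset_le_if_distinct_subset) auto
  then obtain rest where rest: "mset ys = mset [1, 3, 7, 9] + rest"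
    unfolding subset_mset.le_iff_add by blast
  obtain xs where xs: "mset xs = rest"
    using ex_mset by blast
  obtain ds where ds: "mset ds = {#1, 3, 7, 9#}" and "\<not> prime (from_digits (xs @ ds))"
    using exists_arrangement_1379_composite by blast
  moreover have "mset (xs @ ds) = mset ys"
    using rest xs ds by (simp add: add.commute)
  ultimately show ?thesis
    by blast
qed

theorem lemma2:
  fixes N :: nat
  assumes "absolute_prime N"
  shows "\<not> ({1, 3, 7, 9} \<subseteq> set (decimal_digits N))"
  using assms exists_non_prime_permutation_if_1379 unfolding absolute_prime_def by blast

end
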